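(* Let $S$ be a semigroup and $A=(\mu_A,\nu_A)$ an IF subset of $S$. Then $A$ is an IF semiprime ideal of $S$ if and only if $\underline{A}$ is a semiprime ideal of the semigroup $(\underline{S},\circ)$.
   Context: An intuitionistic fuzzy (IF) subset of $S$ is a pair $A=(\mu_A,\nu_A)$ of functions $S\to[0,1]$ with $\mu_A(x)+\nu_A(x)\le1$ for all $x$. $A$ is an IF ideal of $S$ if $\mu_A(xy)\ge\max\{\mu_A(x),\mu_A(y)\}$ and $\nu_A(xy)\le\min\{\nu_A(x),\nu_A(y)\}$ for all $x,y\in S$; an IF semiprime ideal is an IF ideal with $\mu_A(x)\ge\mu_A(x^2)$ and $\nu_A(x)\le\nu_A(x^2)$ for all $x\in S$. For $x\in S$ and $\alpha,\beta\in[0,1]$ with $\alpha+\beta\le1$, the IF point $x_{(\alpha,\beta)}$ is the IF subset of $S$ with value $(\alpha,\beta)$ at $x$ and $(0,1)$ elsewhere (so all points $x_{(0,1)}$ coincide). $\underline{S}$ is the set of all IF points of $S$; it is a semigroup under $x_{(\alpha,\beta)}\circ y_{(\gamma,\delta)}=(xy)_{(\min(\alpha,\gamma),\max(\beta,\delta))}$. For an IF subset $A$, $\underline{A}=\{x_{(\alpha,\beta)}\in\underline{S}:\mu_A(x)\ge\alpha,\ \nu_A(x)\le\beta\}$. In a semigroup $T$, an ideal is a non-empty $I\subseteq T$ with $TI\subseteq I$ and $IT\subseteq I$; here a semiprime ideal of $T$ means an ideal $I$ such that for every $t\in T$, $t^2\in I$ implies $t\in I$. *)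

theory Defs
  imports Main "HOL.Real"
begin

definition IF_subset :: "('a \<Rightarrow> real) \<Rightarrow> ('a \<Rightarrow> real) \<Rightarrow> bool" where
  "IF_subset mu nu \<longleftrightarrow>
     (\<forall>x. 0 \<le> mu x \<and> mu x \<le> 1 \<and> 0 \<le> nu x \<and> nu x \<le> 1 \<and> mu x + nu x \<le> 1)"

definition IF_ideal :: "('a::semigroup_mult \<Rightarrow> real) \<Rightarrow> ('a \<Rightarrow> real) \<Rightarrow> bool" where
  "IF_ideal mu nu \<longleftrightarrow> IF_subset mu nu \<and>
     (\<forall>x y. mu (x * y) \<ge> max (mu x) (mu y) \<and> nu (x * y) \<le> min (nu x) (nu y))"

definition IF_semiprime_ideal :: "('a::semigroup_mult \<Rightarrow> real) \<Rightarrow> ('a \<Rightarrow> real) \<Rightarrow> bool" where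
  "IF_semiprime_ideal mu nu \<longleftrightarrow> IF_ideal mu nu \<and>
     (\<forall>x. mu x \<ge> mu (x * x) \<and> nu x \<le> nu (x * x))"

text \<open>IF points, represented as the IF subsets they are (so all x_(0,1) coincide).\<close>

type_synonym 'a ifset = "('a \<Rightarrow> real) \<times> ('a \<Rightarrow> real)"

definition IF_point :: "'a \<Rightarrow> real \<Rightarrow> real \<Rightarrow> 'a ifset" where
  "IF_point x \<alpha> \<beta> = ((\<lambda>y. if y = x then \<alpha> else 0), (\<lambda>y. if y = x then \<beta> else 1))"

definition valid_pair :: "real \<Rightarrow> real \<Rightarrow> bool" where
  "valid_pair \<alpha> \<beta> \<longleftrightarrow> 0 \<le> \<alpha> \<and> \<alpha> \<le> 1 \<and> 0 \<le> \<beta> \<and> \<beta> \<le> 1 \<and> \<alpha> + \<beta> \<le> 1"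

definition IF_points :: "'a ifset set" where
  "IF_points = {IF_point x \<alpha> \<beta> | x \<alpha> \<beta>. valid_pair \<alpha> \<beta>}"

text \<open>The product of IF points: x_(a,b) o y_(c,d) = (xy)_(min a c, max b d).
  (Well defined, since the only identification among points is that of all x_(0,1).)\<close>
definition IF_point_mult :: "'a::semigroup_mult ifset \<Rightarrow> 'a ifset \<Rightarrow> 'a ifset" where
  "IF_point_mult P Q = (THE R. \<exists>x \<alpha> \<beta> y \<gamma> \<delta>. valid_pair \<alpha> \<beta> \<and> valid_pair \<gamma> \<delta> \<and>
      P = IF_point x \<alpha> \<beta> \<and> Q = IF_point y \<gamma> \<delta> \<and>
      R = IF_point (x * y) (min \<alpha> \<gamma>) (max \<beta> \<delta>))"

definition IF_points_of :: "('a \<Rightarrow> real) \<Rightarrow> ('a \<Rightarrow> real) \<Rightarrow> 'a ifset set" where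
  "IF_points_of mu nu = {IF_point x \<alpha> \<beta> | x \<alpha> \<beta>. valid_pair \<alpha> \<beta> \<and> mu x \<ge> \<alpha> \<and> nu x \<le> \<beta>}"

definition sg_ideal :: "'b set \<Rightarrow> ('b \<Rightarrow> 'b \<Rightarrow> 'b) \<Rightarrow> 'b set \<Rightarrow> bool" where
  "sg_ideal T f I \<longleftrightarrow> I \<noteq> {} \<and> I \<subseteq> T \<and> (\<forall>t\<in>T. \<forall>i\<in>I. f t i \<in> I \<and> f i t \<in> I)"

definition sg_semiprime_ideal :: "'b set \<Rightarrow> ('b \<Rightarrow> 'b \<Rightarrow> 'b) \<Rightarrow> 'b set \<Rightarrow> bool" where
  "sg_semiprime_ideal T f I \<longleftrightarrow> sg_ideal T f I \<and> (\<forall>t\<in>T. f t t \<in> I \<longrightarrow> t \<in> I)"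

end

theory Submission
  imports Defs
begin

text \<open>
  An IF point x_(a,b) lies in underline A exactly when it is the zero point
  x_(0,1) or when a \<le> mu x and nu x \<le> b; and the product of two points is computed
  componentwise by x_(a,b) o y_(c,d) = (xy)_(min a c, max b d), the only identification of
  points being that of all zero points.  With these two facts the theorem splits into two
  independent transfer principles:
  \<^item> the ideal inequalities for (mu, nu) hold iff underline A absorbs products with arbitrary
    points from both sides (for the converse, multiply the point x_(mu x, nu x) by y_(1,0));
  \<^item> the semiprimeness inequalities hold iff t o t in underline A forces t in underline A
    (for the converse, square the point x_(mu(xx), nu(xx))).
  Nonemptiness of underline A (it contains the zero point) and underline A \<subseteq> underline S
  are immediate, and the theorem follows by unfolding the definitions.
\<close>

lemma IF_point_zero_eq: "IF_point x 0 1 = IF_point y 0 1"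
  by (auto simp: IF_point_def)

lemma IF_point_eq_cases:
  assumes eq: "IF_point x a b = IF_point y c d"
  shows "(a = 0 \<and> b = 1 \<and> c = 0 \<and> d = 1) \<or> (x = y \<and> a = c \<and> b = d)"
proof -
  have "fst (IF_point x a b) z = fst (IF_point y c d) z"
       "snd (IF_point x a b) z = snd (IF_point y c d) z" for z
    using eq by simp_all
  from this[of x] this[of y] show ?thesis
    by (cases "x = y") (simp_all add: IF_point_def)
qed

lemma valid_pair_min_max:
  "valid_pair a b \<Longrightarrow> valid_pair c d \<Longrightarrow> valid_pair (min a c) (max b d)"
  by (auto simp: valid_pair_def min_def max_def)

lemma valid_pair_zero_point: "valid_pair 0 1"
  and valid_pair_unit_point: "valid_pair 1 0"
  by (simp_all add: valid_pair_def)

lemma IF_point_in_IF_points: "valid_pair a b \<Longrightarrow> IF_point x a b \<in> IF_points"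
  unfolding IF_points_def by blast

text \<open>The product of points is well defined and given by the expected formula; the only
  ambiguity of the representation (the zero point) is harmless since min/max then again
  produce the value (0,1).\<close>
lemma IF_point_mult_points:
  fixes x y :: "'a::semigroup_mult"
  assumes ab: "valid_pair a b" and cd: "valid_pair c d"
  shows "IF_point_mult (IF_point x a b) (IF_point y c d) = IF_point (x * y) (min a c) (max b d)"
  unfolding IF_point_mult_def
proof (rule the_equality)
  show "\<exists>x' \<alpha> \<beta> y' \<gamma> \<delta>. valid_pair \<alpha> \<beta> \<and> valid_pair \<gamma> \<delta> \<and>
      IF_point x a b = IF_point x' \<alpha> \<beta> \<and> IF_point y c d = IF_point y' \<gamma> \<delta> \<and>
      IF_point (x * y) (min a c) (max b d) = IF_point (x' * y') (min \<alpha> \<gamma>) (max \<beta> \<delta>)"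
    using ab cd by blast
next
  fix R
  assume "\<exists>x' \<alpha> \<beta> y' \<gamma> \<delta>. valid_pair \<alpha> \<beta> \<and> valid_pair \<gamma> \<delta> \<and>
      IF_point x a b = IF_point x' \<alpha> \<beta> \<and> IF_point y c d = IF_point y' \<gamma> \<delta> \<and>
      R = IF_point (x' * y') (min \<alpha> \<gamma>) (max \<beta> \<delta>)"
  then obtain x' \<alpha> \<beta> y' \<gamma> \<delta> where valid: "valid_pair \<alpha> \<beta>" "valid_pair \<gamma> \<delta>"
    and eq1: "IF_point x a b = IF_point x' \<alpha> \<beta>" and eq2: "IF_point y c d = IF_point y' \<gamma> \<delta>"
    and R: "R = IF_point (x' * y') (min \<alpha> \<gamma>) (max \<beta> \<delta>)"
    by blast
  consider "(a = 0 \<and> b = 1 \<and> \<alpha> = 0 \<and> \<beta> = 1) \<or> (c = 0 \<and> d = 1 \<and> \<gamma> = 0 \<and> \<delta> = 1)"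
    | "x = x' \<and> a = \<alpha> \<and> b = \<beta>" "y = y' \<and> c = \<gamma> \<and> d = \<delta>"
    using IF_point_eq_cases[OF eq1] IF_point_eq_cases[OF eq2] by blast
  then show "R = IF_point (x * y) (min a c) (max b d)"
  proof cases
    case 1
    then have "min a c = 0" "max b d = 1" "min \<alpha> \<gamma> = 0" "max \<beta> \<delta> = 1"
      using ab cd valid by (auto simp: valid_pair_def)
    then show ?thesis unfolding R by (simp add: IF_point_zero_eq)
  qed (simp add: R)
qed

lemma IF_points_of_subset: "IF_points_of mu nu \<subseteq> IF_points"
  unfolding IF_points_of_def IF_points_def by blast

lemma IF_point_in_IF_points_of:
  "valid_pair a b \<Longrightarrow> a \<le> mu x \<Longrightarrow> nu x \<le> b \<Longrightarrow> IF_point x a b \<in> IF_points_of mu nu"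
  unfolding IF_points_of_def by blast

lemma IF_subset_valid_pair: "IF_subset mu nu \<Longrightarrow> valid_pair (mu x) (nu x)"
  by (simp add: IF_subset_def valid_pair_def)

lemma IF_point_in_IF_points_of_iff:
  assumes A: "IF_subset mu nu" and ab: "valid_pair a b"
  shows "IF_point x a b \<in> IF_points_of mu nu \<longleftrightarrow> (a = 0 \<and> b = 1) \<or> (a \<le> mu x \<and> nu x \<le> b)"
proof
  assume "IF_point x a b \<in> IF_points_of mu nu"
  then obtain x' a' b' where eq: "IF_point x a b = IF_point x' a' b'"
    and "a' \<le> mu x'" "nu x' \<le> b'"
    unfolding IF_points_of_def by blast
  then show "(a = 0 \<and> b = 1) \<or> (a \<le> mu x \<and> nu x \<le> b)"
    using IF_point_eq_cases[OF eq] by auto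
next
  assume cases: "(a = 0 \<and> b = 1) \<or> (a \<le> mu x \<and> nu x \<le> b)"
  have "IF_point x 0 1 \<in> IF_points_of mu nu"
    using A by (intro IF_point_in_IF_points_of valid_pair_zero_point) (auto simp: IF_subset_def)
  then show "IF_point x a b \<in> IF_points_of mu nu"
    using cases IF_point_in_IF_points_of[OF ab] by auto
qed

lemma IF_points_of_nonempty:
  assumes "IF_subset mu nu" shows "IF_points_of mu nu \<noteq> {}"
  using IF_point_in_IF_points_of_iff[OF assms valid_pair_zero_point, of undefined] by auto

lemma IF_point_graph_in_IF_points_of:
  "IF_subset mu nu \<Longrightarrow> IF_point x (mu x) (nu x) \<in> IF_points_of mu nu"
  by (rule IF_point_in_IF_points_of[OF IF_subset_valid_pair]) simp_all

lemma IF_points_of_absorbing: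
  fixes mu nu :: "'a::semigroup_mult \<Rightarrow> real"
  assumes ideal: "\<forall>x y. max (mu x) (mu y) \<le> mu (x * y) \<and> nu (x * y) \<le> min (nu x) (nu y)"
  shows "\<forall>t\<in>IF_points. \<forall>i\<in>IF_points_of mu nu.
    IF_point_mult t i \<in> IF_points_of mu nu \<and> IF_point_mult i t \<in> IF_points_of mu nu"
proof (intro ballI)
  fix t i :: "'a ifset"
  assume "t \<in> IF_points" and "i \<in> IF_points_of mu nu"
  then obtain y x :: 'a and c d a b where t_def: "t = IF_point y c d" and cd: "valid_pair c d"
    and i_def: "i = IF_point x a b" and ab: "valid_pair a b" and below: "a \<le> mu x" "nu x \<le> b"
    unfolding IF_points_def IF_points_of_def by blast
  have "mu x \<le> mu (y * x)" "nu (y * x) \<le> nu x" "mu x \<le> mu (x * y)" "nu (x * y) \<le> nu x"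
    using ideal by auto
  then have "IF_point (y * x) (min c a) (max d b) \<in> IF_points_of mu nu"
    "IF_point (x * y) (min a c) (max b d) \<in> IF_points_of mu nu"
    using below by (auto intro!: IF_point_in_IF_points_of valid_pair_min_max ab cd)
  then show "IF_point_mult t i \<in> IF_points_of mu nu \<and> IF_point_mult i t \<in> IF_points_of mu nu"
    unfolding t_def i_def by (simp add: IF_point_mult_points ab cd)
qed

text \<open>Conversely, absorption yields the IF ideal inequalities: multiplying the point
  x_(mu x, nu x) by y_(1,0) on either side gives (yx)_(mu x, nu x) and (xy)_(mu x, nu x),
  so mu and nu can only grow resp. shrink when x is multiplied by anything.\<close>
lemma IF_ideal_ineq_of_absorbing:
  fixes mu nu :: "'a::semigroup_mult \<Rightarrow> real"
  assumes A: "IF_subset mu nu"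
    and absorb: "\<forall>t\<in>IF_points. \<forall>i\<in>IF_points_of mu nu.
      IF_point_mult t i \<in> IF_points_of mu nu \<and> IF_point_mult i t \<in> IF_points_of mu nu"
  shows "\<forall>x y. max (mu x) (mu y) \<le> mu (x * y) \<and> nu (x * y) \<le> min (nu x) (nu y)"
proof -
  have one_sided: "mu x \<le> mu (y * x) \<and> nu (y * x) \<le> nu x \<and> mu x \<le> mu (x * y) \<and> nu (x * y) \<le> nu x"
    for x y
  proof -
    have vx: "valid_pair (mu x) (nu x)" using A by (rule IF_subset_valid_pair)
    have bounds: "min 1 (mu x) = mu x" "max 0 (nu x) = nu x" "min (mu x) 1 = mu x" "max (nu x) 0 = nu x"
      and nonneg: "0 \<le> mu (y * x)" "0 \<le> mu (x * y)" and le_one: "nu (y * x) \<le> 1" "nu (x * y) \<le> 1"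
      using A by (auto simp: IF_subset_def)
    have "IF_point_mult (IF_point y 1 0) (IF_point x (mu x) (nu x)) \<in> IF_points_of mu nu"
      "IF_point_mult (IF_point x (mu x) (nu x)) (IF_point y 1 0) \<in> IF_points_of mu nu"
      using absorb IF_point_in_IF_points[OF valid_pair_unit_point, of y]
        IF_point_graph_in_IF_points_of[OF A, of x] by blast+
    then have "IF_point (y * x) (mu x) (nu x) \<in> IF_points_of mu nu"
      "IF_point (x * y) (mu x) (nu x) \<in> IF_points_of mu nu"
      by (simp_all add: IF_point_mult_points vx valid_pair_unit_point bounds)
    then show ?thesis
      using nonneg le_one unfolding IF_point_in_IF_points_of_iff[OF A vx] by auto
  qed
  show ?thesis using one_sided by simp
qed

text \<open>Since x_(a,b) o x_(a,b) = (xx)_(a,b), the inequalities mu(xx) \<le> mu x and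
  nu x \<le> nu(xx) say precisely that a point whose square lies in underline A lies there too.\<close>
lemma IF_points_of_semiprime:
  fixes mu nu :: "'a::semigroup_mult \<Rightarrow> real"
  assumes A: "IF_subset mu nu"
    and semiprime: "\<forall>x. mu (x * x) \<le> mu x \<and> nu x \<le> nu (x * x)"
  shows "\<forall>t\<in>IF_points. IF_point_mult t t \<in> IF_points_of mu nu \<longrightarrow> t \<in> IF_points_of mu nu"
proof (intro ballI impI)
  fix t :: "'a ifset"
  assume "t \<in> IF_points" and square: "IF_point_mult t t \<in> IF_points_of mu nu"
  then obtain x a b where t_def: "t = IF_point x a b" and ab: "valid_pair a b"
    unfolding IF_points_def by blast
  have "IF_point (x * x) a b \<in> IF_points_of mu nu"
    using square by (simp add: t_def IF_point_mult_points ab)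
  then have "(a = 0 \<and> b = 1) \<or> (a \<le> mu (x * x) \<and> nu (x * x) \<le> b)"
    unfolding IF_point_in_IF_points_of_iff[OF A ab] .
  then have "(a = 0 \<and> b = 1) \<or> (a \<le> mu x \<and> nu x \<le> b)"
    using semiprime[rule_format, of x] by linarith
  then show "t \<in> IF_points_of mu nu"
    unfolding t_def IF_point_in_IF_points_of_iff[OF A ab] .
qed

text \<open>Conversely, the square of the point x_(mu(xx), nu(xx)) is the point
  (xx)_(mu(xx), nu(xx)) of underline A, so semiprimeness puts x_(mu(xx), nu(xx)) in
  underline A, which is the semiprimeness inequality at x.\<close>
lemma IF_semiprime_ineq_of_points:
  fixes mu nu :: "'a::semigroup_mult \<Rightarrow> real"
  assumes A: "IF_subset mu nu"
    and semiprime: "\<forall>t\<in>IF_points. IF_point_mult t t \<in> IF_points_of mu nu \<longrightarrow> t \<in> IF_points_of mu nu"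
  shows "\<forall>x. mu (x * x) \<le> mu x \<and> nu x \<le> nu (x * x)"
proof
  fix x
  have vxx: "valid_pair (mu (x * x)) (nu (x * x))" using A by (rule IF_subset_valid_pair)
  let ?p = "IF_point x (mu (x * x)) (nu (x * x))"
  have "IF_point_mult ?p ?p = IF_point (x * x) (mu (x * x)) (nu (x * x))"
    using IF_point_mult_points[OF vxx vxx] by simp
  then have "IF_point_mult ?p ?p \<in> IF_points_of mu nu"
    using IF_point_graph_in_IF_points_of[OF A] by simp
  then have "?p \<in> IF_points_of mu nu"
    by (rule semiprime[rule_format, OF IF_point_in_IF_points[OF vxx]])
  then have "(mu (x * x) = 0 \<and> nu (x * x) = 1) \<or> (mu (x * x) \<le> mu x \<and> nu x \<le> nu (x * x))"
    unfolding IF_point_in_IF_points_of_iff[OF A vxx] .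
  moreover have "0 \<le> mu x" "nu x \<le> 1" using A by (simp_all add: IF_subset_def)
  ultimately show "mu (x * x) \<le> mu x \<and> nu x \<le> nu (x * x)" by auto
qed

theorem theorem3p17:
  fixes mu nu :: "'a::semigroup_mult \<Rightarrow> real"
  assumes "IF_subset mu nu"
  shows "IF_semiprime_ideal mu nu \<longleftrightarrow>
         sg_semiprime_ideal IF_points IF_point_mult (IF_points_of mu nu)"
proof
  assume "IF_semiprime_ideal mu nu"
  then have ideal: "\<forall>x y. max (mu x) (mu y) \<le> mu (x * y) \<and> nu (x * y) \<le> min (nu x) (nu y)"
    and semiprime: "\<forall>x. mu (x * x) \<le> mu x \<and> nu x \<le> nu (x * x)"
    unfolding IF_semiprime_ideal_def IF_ideal_def by simp_all
  show "sg_semiprime_ideal IF_points IF_point_mult (IF_points_of mu nu)"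
    unfolding sg_semiprime_ideal_def sg_ideal_def
    using IF_points_of_nonempty[OF assms] IF_points_of_subset[of mu nu]
      IF_points_of_absorbing[of mu nu, OF ideal] IF_points_of_semiprime[OF assms semiprime]
    by (intro conjI)
next
  assume "sg_semiprime_ideal IF_points IF_point_mult (IF_points_of mu nu)"
  then have absorb: "\<forall>t\<in>IF_points. \<forall>i\<in>IF_points_of mu nu.
      IF_point_mult t i \<in> IF_points_of mu nu \<and> IF_point_mult i t \<in> IF_points_of mu nu"
    and semiprime: "\<forall>t\<in>IF_points. IF_point_mult t t \<in> IF_points_of mu nu \<longrightarrow> t \<in> IF_points_of mu nu"
    unfolding sg_semiprime_ideal_def sg_ideal_def by blast+
  show "IF_semiprime_ideal mu nu"
    unfolding IF_semiprime_ideal_def IF_ideal_def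
    using assms IF_ideal_ineq_of_absorbing[OF assms absorb]
      IF_semiprime_ineq_of_points[OF assms semiprime]
    by (intro conjI)
qed

end
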